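(* Let $\varphi$ be a modal formula, let $\mathrm{Sub}(\varphi)$ be its set of subformulas, and let $q$ be a propositional variable not occurring in $\varphi$. Put $q^1=q$, $q^0=\neg q$, and $$X=\{\Box(q^e\to\psi)\to\psi:\ e\in\{0,1\},\ \Box\psi\in\mathrm{Sub}(\varphi)\}.$$ Let $X^{\boxdot}=\{\xi^{\boxdot}:\xi\in X\}$. Then: (i) $X^{\boxdot}\vdash_{\mathbf K}\Box\psi^{\boxdot}\to\psi^{\boxdot}$ for every $\Box\psi\in\mathrm{Sub}(\varphi)$; this derivation does not even need necessitation. (ii) $X^{\boxdot}\vdash_{\mathbf K}\psi\leftrightarrow\psi^{\boxdot}$ for every $\psi\in\mathrm{Sub}(\varphi)$.
   Context: $\mathbf K$ is the smallest normal modal logic. The boxdot translation $\varphi\mapsto\varphi^{\boxdot}$ fixes variables, commutes with Boolean connectives, and satisfies $(\Box\varphi)^{\boxdot}=\varphi^{\boxdot}\wedge\Box\varphi^{\boxdot}$. For a normal modal logic $L$, a set of formulas $Y$ and a formula $\theta$, $Y\vdash_L\theta$ (global consequence) means that $\theta$ has a finite derivation from elements of $Y$ and theorems of $L$ using modus ponens and necessitation. *)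

theory Defs
  imports Main
begin

datatype fm =
    Var nat
  | Bot
  | Top
  | Neg fm
  | And fm fm
  | Or fm fm
  | Imp fm fm
  | Box fm

definition Iff :: "fm \<Rightarrow> fm \<Rightarrow> fm" where
  "Iff A B = And (Imp A B) (Imp B A)"

fun vars :: "fm \<Rightarrow> nat set" where
  "vars (Var p) = {p}"
| "vars Bot = {}"
| "vars Top = {}"
| "vars (Neg A) = vars A"
| "vars (And A B) = vars A \<union> vars B"
| "vars (Or A B) = vars A \<union> vars B"
| "vars (Imp A B) = vars A \<union> vars B"
| "vars (Box A) = vars A"

fun Sub :: "fm \<Rightarrow> fm set" where
  "Sub (Var p) = {Var p}"
| "Sub Bot = {Bot}"
| "Sub Top = {Top}"
| "Sub (Neg A) = insert (Neg A) (Sub A)"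
| "Sub (And A B) = insert (And A B) (Sub A \<union> Sub B)"
| "Sub (Or A B) = insert (Or A B) (Sub A \<union> Sub B)"
| "Sub (Imp A B) = insert (Imp A B) (Sub A \<union> Sub B)"
| "Sub (Box A) = insert (Box A) (Sub A)"

fun boxdot :: "fm \<Rightarrow> fm" where
  "boxdot (Var p) = Var p"
| "boxdot Bot = Bot"
| "boxdot Top = Top"
| "boxdot (Neg A) = Neg (boxdot A)"
| "boxdot (And A B) = And (boxdot A) (boxdot B)"
| "boxdot (Or A B) = Or (boxdot A) (boxdot B)"
| "boxdot (Imp A B) = Imp (boxdot A) (boxdot B)"
| "boxdot (Box A) = And (boxdot A) (Box (boxdot A))"

fun peval :: "(fm \<Rightarrow> bool) \<Rightarrow> fm \<Rightarrow> bool" where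
  "peval v (Var p) = v (Var p)"
| "peval v Bot = False"
| "peval v Top = True"
| "peval v (Neg A) = (\<not> peval v A)"
| "peval v (And A B) = (peval v A \<and> peval v B)"
| "peval v (Or A B) = (peval v A \<or> peval v B)"
| "peval v (Imp A B) = (peval v A \<longrightarrow> peval v B)"
| "peval v (Box A) = v (Box A)"

definition taut :: "fm \<Rightarrow> bool" where
  "taut A \<longleftrightarrow> (\<forall>v. peval v A)"

inductive K_thm :: "fm \<Rightarrow> bool" where
  K_taut: "taut A \<Longrightarrow> K_thm A"
| K_ax: "K_thm (Imp (Box (Imp A B)) (Imp (Box A) (Box B)))"
| K_mp: "K_thm (Imp A B) \<Longrightarrow> K_thm A \<Longrightarrow> K_thm B"
| K_nec: "K_thm A \<Longrightarrow> K_thm (Box A)"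

text \<open>Global consequence Y |-_K A: derivation from Y and theorems of K by MP and necessitation.\<close>
inductive gcons :: "fm set \<Rightarrow> fm \<Rightarrow> bool" for Y where
  g_hyp: "A \<in> Y \<Longrightarrow> gcons Y A"
| g_thm: "K_thm A \<Longrightarrow> gcons Y A"
| g_mp: "gcons Y (Imp A B) \<Longrightarrow> gcons Y A \<Longrightarrow> gcons Y B"
| g_nec: "gcons Y A \<Longrightarrow> gcons Y (Box A)"

inductive mpcons :: "fm set \<Rightarrow> fm \<Rightarrow> bool" for Y where
  m_hyp: "A \<in> Y \<Longrightarrow> mpcons Y A"
| m_thm: "K_thm A \<Longrightarrow> mpcons Y A"
| m_mp: "mpcons Y (Imp A B) \<Longrightarrow> mpcons Y A \<Longrightarrow> mpcons Y B"

definition qlit :: "nat \<Rightarrow> bool \<Rightarrow> fm" where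
  "qlit q e = (if e then Var q else Neg (Var q))"

definition Xset :: "fm \<Rightarrow> nat \<Rightarrow> fm set" where
  "Xset \<phi> q = {Imp (Box (Imp (qlit q e) \<psi>)) \<psi> | e \<psi>. Box \<psi> \<in> Sub \<phi>}"

end

theory Submission
  imports Defs
begin

text \<open>
  For (i): \<open>\<box>\<psi>\<^sup>\<boxdot>\<close> yields \<open>\<box>(q\<^sup>e \<rightarrow> \<psi>\<^sup>\<boxdot>)\<close> by monotonicity of \<open>\<box>\<close>, and then the translated
  member \<open>(q\<^sup>e \<rightarrow> \<psi>\<^sup>\<boxdot>) \<and> \<box>(q\<^sup>e \<rightarrow> \<psi>\<^sup>\<boxdot>) \<rightarrow> \<psi>\<^sup>\<boxdot>\<close> of \<open>X\<^sup>\<boxdot>\<close> gives \<open>(q\<^sup>e \<rightarrow> \<psi>\<^sup>\<boxdot>) \<rightarrow> \<psi>\<^sup>\<boxdot>\<close>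
  for both values of \<open>e\<close>; a case split on \<open>q\<close> yields \<open>\<psi>\<^sup>\<boxdot>\<close>.
  For (ii) induct on \<open>\<psi>\<close>: the Boolean cases are propositional, and for \<open>\<box>\<psi>\<close> the induction
  hypothesis with necessitation gives \<open>\<box>\<psi> \<leftrightarrow> \<box>\<psi>\<^sup>\<boxdot>\<close>, while (i) makes \<open>\<box>\<psi>\<^sup>\<boxdot>\<close> equivalent
  to \<open>\<psi>\<^sup>\<boxdot> \<and> \<box>\<psi>\<^sup>\<boxdot>\<close>.
\<close>

lemma Sub_refl [simp]: "A \<in> Sub A"
  by (cases A) auto

lemma Sub_trans: "B \<in> Sub A \<Longrightarrow> C \<in> Sub B \<Longrightarrow> C \<in> Sub A"
  by (induction A) auto

lemma boxdot_qlit [simp]: "boxdot (qlit q e) = qlit q e"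
  by (simp add: qlit_def)

lemma K_thm_Box_mono: "taut (Imp A B) \<Longrightarrow> K_thm (Imp (Box A) (Box B))"
  by (meson K_ax K_mp K_nec K_taut)

lemma mpcons_imp_gcons: "mpcons Y A \<Longrightarrow> gcons Y A"
  by (induction rule: mpcons.induct) (auto intro: gcons.intros)

lemma mpcons_taut_consequence:
  assumes "\<forall>A\<in>set As. mpcons Y A" and "taut (foldr Imp As C)"
  shows "mpcons Y C"
proof -
  have "mpcons Y (foldr Imp As C)"
    using assms(2) by (intro m_thm K_taut)
  with assms(1) show ?thesis
    by (induction As) (auto intro: m_mp)
qed

lemma gcons_taut_consequence:
  assumes "\<forall>A\<in>set As. gcons Y A" and "taut (foldr Imp As C)"
  shows "gcons Y C"
proof -
  have "gcons Y (foldr Imp As C)"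
    using assms(2) by (intro g_thm K_taut)
  with assms(1) show ?thesis
    by (induction As) (auto intro: g_mp)
qed

lemma gcons_Box_Iff:
  assumes "gcons Y (Iff A B)"
  shows "gcons Y (Iff (Box A) (Box B))"
proof -
  have K: "gcons Y (Imp (Box (Imp A' B')) (Imp (Box A') (Box B')))" for A' B'
    by (intro g_thm K_ax)
  have "gcons Y (Imp (Box (Iff A B)) (Box (Imp A B)))"
       "gcons Y (Imp (Box (Iff A B)) (Box (Imp B A)))"
    by (intro g_thm K_thm_Box_mono; simp add: taut_def Iff_def)+
  with K g_nec[OF assms] show ?thesis
    by (intro gcons_taut_consequence[where As = "[Box (Iff A B),
          Imp (Box (Iff A B)) (Box (Imp A B)), Imp (Box (Iff A B)) (Box (Imp B A)),
          Imp (Box (Imp A B)) (Imp (Box A) (Box B)), Imp (Box (Imp B A)) (Imp (Box B) (Box A))]"])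
       (auto simp: taut_def Iff_def)
qed

lemma mpcons_Xset_boxdot_reflexive:
  assumes "Box \<psi> \<in> Sub \<phi>"
  shows "mpcons (boxdot ` Xset \<phi> q) (Imp (Box (boxdot \<psi>)) (boxdot \<psi>))"
proof -
  let ?Y = "boxdot ` Xset \<phi> q"
  let ?p = "boxdot \<psi>"
  have ax: "mpcons ?Y (Imp (And (Imp (qlit q e) ?p) (Box (Imp (qlit q e) ?p))) ?p)" for e
  proof -
    have "Imp (Box (Imp (qlit q e) \<psi>)) \<psi> \<in> Xset \<phi> q"
      using assms unfolding Xset_def by blast
    then show ?thesis
      by (force intro: m_hyp)
  qed
  have mono: "mpcons ?Y (Imp (Box ?p) (Box (Imp (qlit q e) ?p)))" for e
    by (intro m_thm K_thm_Box_mono) (simp add: taut_def)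
  let ?As = "[Imp (And (Imp (qlit q True) ?p) (Box (Imp (qlit q True) ?p))) ?p,
              Imp (And (Imp (qlit q False) ?p) (Box (Imp (qlit q False) ?p))) ?p,
              Imp (Box ?p) (Box (Imp (qlit q True) ?p)),
              Imp (Box ?p) (Box (Imp (qlit q False) ?p))]"
  have "\<forall>A\<in>set ?As. mpcons ?Y A"
    using ax mono by simp
  moreover have "taut (foldr Imp ?As (Imp (Box ?p) ?p))"
    by (auto simp: taut_def qlit_def)
  ultimately show ?thesis
    by (rule mpcons_taut_consequence)
qed

lemma gcons_Xset_Iff_boxdot:
  "\<psi> \<in> Sub \<phi> \<Longrightarrow> gcons (boxdot ` Xset \<phi> q) (Iff \<psi> (boxdot \<psi>))"
proof (induction \<psi>)
  case (Box a)
  have "a \<in> Sub \<phi>"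
    using Sub_trans[OF Box.prems] by simp
  then have "gcons (boxdot ` Xset \<phi> q) (Iff (Box a) (Box (boxdot a)))"
    using Box.IH by (intro gcons_Box_Iff)
  moreover have "gcons (boxdot ` Xset \<phi> q) (Imp (Box (boxdot a)) (boxdot a))"
    using Box.prems by (intro mpcons_imp_gcons mpcons_Xset_boxdot_reflexive)
  ultimately show ?case
    by (intro gcons_taut_consequence[where As = "[Iff (Box a) (Box (boxdot a)),
          Imp (Box (boxdot a)) (boxdot a)]"])
       (auto simp: taut_def Iff_def)
next
  case (Neg a)
  have "a \<in> Sub \<phi>"
    using Sub_trans[OF Neg.prems] by simp
  then have "gcons (boxdot ` Xset \<phi> q) (Iff a (boxdot a))"
    by (rule Neg.IH)
  then show ?case
    by (intro gcons_taut_consequence[where As = "[Iff a (boxdot a)]"])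
       (auto simp: taut_def Iff_def)
next
  case (And a c)
  have "a \<in> Sub \<phi>" "c \<in> Sub \<phi>"
    using Sub_trans[OF And.prems] by simp_all
  then have "gcons (boxdot ` Xset \<phi> q) (Iff a (boxdot a))"
            "gcons (boxdot ` Xset \<phi> q) (Iff c (boxdot c))"
    by (simp_all add: And.IH)
  then show ?case
    by (intro gcons_taut_consequence[where As = "[Iff a (boxdot a), Iff c (boxdot c)]"])
       (auto simp: taut_def Iff_def)
next
  case (Or a c)
  have "a \<in> Sub \<phi>" "c \<in> Sub \<phi>"
    using Sub_trans[OF Or.prems] by simp_all
  then have "gcons (boxdot ` Xset \<phi> q) (Iff a (boxdot a))"
            "gcons (boxdot ` Xset \<phi> q) (Iff c (boxdot c))"
    by (simp_all add: Or.IH)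
  then show ?case
    by (intro gcons_taut_consequence[where As = "[Iff a (boxdot a), Iff c (boxdot c)]"])
       (auto simp: taut_def Iff_def)
next
  case (Imp a c)
  have "a \<in> Sub \<phi>" "c \<in> Sub \<phi>"
    using Sub_trans[OF Imp.prems] by simp_all
  then have "gcons (boxdot ` Xset \<phi> q) (Iff a (boxdot a))"
            "gcons (boxdot ` Xset \<phi> q) (Iff c (boxdot c))"
    by (simp_all add: Imp.IH)
  then show ?case
    by (intro gcons_taut_consequence[where As = "[Iff a (boxdot a), Iff c (boxdot c)]"])
       (auto simp: taut_def Iff_def)
qed (auto intro!: g_thm K_taut simp: taut_def Iff_def)

theorem claim1:
  fixes \<phi> :: fm and q :: nat
  assumes "q \<notin> vars \<phi>"
  shows "(\<forall>\<psi>. Box \<psi> \<in> Sub \<phi> \<longrightarrow>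
            mpcons (boxdot ` Xset \<phi> q) (Imp (Box (boxdot \<psi>)) (boxdot \<psi>)))
       \<and> (\<forall>\<psi>. \<psi> \<in> Sub \<phi> \<longrightarrow>
            gcons (boxdot ` Xset \<phi> q) (Iff \<psi> (boxdot \<psi>)))"
  using mpcons_Xset_boxdot_reflexive gcons_Xset_Iff_boxdot by blast

end
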